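(* Let $p$ be prime and $H\le\mathrm{S}_n$ be in $\mathfrak{InP}(\mathrm{C}_p)$ with $|H|=p^s$, and let $M\in\mathrm{M}(s,k,p)$ be a generator matrix of $\gamma(H)$ in standard form. Fix $m\in\{s,s+1,\dots,k-1\}$ and let $J=\{1,2,\dots,m\}\,\dot\cup\,\{u\}\subseteq\{1,\dots,k\}$. Let $f:J\to\{1,\dots,k\}$ be an injection. If there exists $i\in\{1,\dots,s\}$ such that $M_{i,f(u)}\ne0$ and $M_{i,f(j)}M_{j,u}=0$ for all $j\in J\cap\{1,\dots,s\}$, then there is no $\nu\in N_{\mathrm{S}_n}(H)$ with $\Omega_j^\nu=\Omega_{f(j)}$ for all $j\in J$.
   Context: $H\le\mathrm{S}_{n}$, $n=pk$, has orbits $\Omega_1,\dots,\Omega_k$ of size $p$ with each $G_i:=H|_{\Omega_i}$ cyclic of order $p$, ordered so that $|H|_{\Omega_1\cup\dots\cup\Omega_s}|=p^s$. $G=G_1\times\dots\times G_k$, $g_1$ generates $G_1$, $g_i$ is the conjugate of $g_1$ by the involution interchanging $\Omega_1$ and $\Omega_i$ via a bijection witnessing a permutation isomorphism $G_1\to G_i$, and $\gamma:G\to\mathbb{F}_p^k$ is $\gamma(g_1^{r_1}\cdots g_k^{r_k})=(r_1,\dots,r_k)$. $M_{i,j}$ denotes the $(i,j)$ entry; standard form means the first $s$ columns of $M$ form the identity $I_s$; the rows of $M$ form a basis of $\gamma(H)$. *)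

theory Defs
  imports "HOL-Algebra.Sym_Groups" "HOL-Algebra.Group_Action" "HOL-Computational_Algebra.Primes"
begin

definition restr :: "nat set \<Rightarrow> (nat \<Rightarrow> nat) \<Rightarrow> (nat \<Rightarrow> nat)" where
  "restr A h = (\<lambda>x. if x \<in> A then h x else x)"

text \<open>The constituent \<open>H|_A\<close>, realised as permutations of {1..n} supported on A.\<close>
definition constituent :: "(nat \<Rightarrow> nat) set \<Rightarrow> nat set \<Rightarrow> (nat \<Rightarrow> nat) set" where
  "constituent H A = restr A ` H"

text \<open>g_i: conjugate of g_1 by the involution interchanging Omega_1 and Omega_i via phi_i.\<close>
definition conj_gen :: "(nat \<Rightarrow> nat set) \<Rightarrow> (nat \<Rightarrow> nat \<Rightarrow> nat) \<Rightarrow> (nat \<Rightarrow> nat) \<Rightarrow> nat \<Rightarrow> (nat \<Rightarrow> nat)" where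
  "conj_gen \<Omega> \<phi> g1 i =
     (if i = 1 then g1 else
      (\<lambda>x. if x \<in> \<Omega> i then \<phi> i (g1 (the_inv_into (\<Omega> 1) (\<phi> i) x))
           else x))"

definition perm_iso_witness :: "(nat \<Rightarrow> nat) set \<Rightarrow> nat set \<Rightarrow> nat set \<Rightarrow> (nat \<Rightarrow> nat) \<Rightarrow> bool" where
  "perm_iso_witness H A B \<phi> \<longleftrightarrow> bij_betw \<phi> A B \<and>
     (\<lambda>a. \<lambda>x. if x \<in> B then \<phi> (a (the_inv_into A \<phi> x)) else x) ` constituent H A = constituent H B"

text \<open>gamma: h \<mapsto> (r_1,...,r_k) with h = g_1^{r_1} ... g_k^{r_k}, r_j in F_p = {0..<p}.\<close>
definition gamma_rep :: "nat \<Rightarrow> nat \<Rightarrow> (nat \<Rightarrow> nat set) \<Rightarrow> (nat \<Rightarrow> (nat \<Rightarrow> nat)) \<Rightarrow> (nat \<Rightarrow> nat) \<Rightarrow> (nat \<Rightarrow> nat) \<Rightarrow> bool" where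
  "gamma_rep p k \<Omega> g h v \<longleftrightarrow> (\<forall>j\<in>{1..k}. v j < p \<and> (\<forall>x\<in>\<Omega> j. h x = (g j ^^ v j) x))"

definition in_rowspace :: "nat \<Rightarrow> nat \<Rightarrow> nat \<Rightarrow> (nat \<Rightarrow> nat \<Rightarrow> nat) \<Rightarrow> (nat \<Rightarrow> nat) \<Rightarrow> bool" where
  "in_rowspace p s k M v \<longleftrightarrow> (\<exists>c::nat\<Rightarrow>nat. \<forall>j\<in>{1..k}. v j = (\<Sum>i=1..s. c i * M i j) mod p)"

definition rows_independent :: "nat \<Rightarrow> nat \<Rightarrow> nat \<Rightarrow> (nat \<Rightarrow> nat \<Rightarrow> nat) \<Rightarrow> bool" where
  "rows_independent p s k M \<longleftrightarrow> (\<forall>c::nat\<Rightarrow>nat.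
     (\<forall>j\<in>{1..k}. (\<Sum>i=1..s. c i * M i j) mod p = 0) \<longrightarrow> (\<forall>i\<in>{1..s}. c i mod p = 0))"

end

(* Let gamma(h) be the exponent vector of h in H with respect to the generators g_j of the
   cyclic constituents, so that gamma(h)_j = 0 exactly when h fixes Omega_j pointwise.
   If nu normalises H, every h' in H is nu h nu^-1 for some h in H, and when nu maps Omega_j
   onto Omega_(f j), h fixes Omega_j pointwise iff h' fixes Omega_(f j) pointwise; hence
   gamma(h)_j = 0 iff gamma(h')_(f j) = 0 for j in J.  Choose h' with gamma(h') equal to row i
   of M.  For l <= s the hypothesis M_(i,f l) M_(l,u) = 0 (all entries lie below the prime p)
   gives gamma(h)_l M_(l,u) = 0, and since M is in standard form,
   gamma(h)_u = sum_(l<=s) gamma(h)_l M_(l,u) = 0.  So M_(i,f u) = gamma(h')_(f u) = 0,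
   contradicting the choice of i. *)

theory Submission
  imports Defs
begin

definition transport :: "('a \<Rightarrow> 'b) \<Rightarrow> 'a set \<Rightarrow> 'b set \<Rightarrow> ('a \<Rightarrow> 'a) \<Rightarrow> 'b \<Rightarrow> 'b" where
  "transport \<phi> A B a = (\<lambda>x. if x \<in> B then \<phi> (a (the_inv_into A \<phi> x)) else x)"

lemma perm_iso_witness_iff:
  "perm_iso_witness H A B \<phi> \<longleftrightarrow>
     bij_betw \<phi> A B \<and> transport \<phi> A B ` constituent H A = constituent H B"
  unfolding perm_iso_witness_def transport_def ..

lemma conj_gen_eq_transport:
  "i \<noteq> 1 \<Longrightarrow> conj_gen \<Omega> \<phi> g1 i = transport (\<phi> i) (\<Omega> 1) (\<Omega> i) g1"
  unfolding conj_gen_def transport_def by simp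

lemma transport_comp:
  assumes "bij_betw \<phi> A B" "b ` A \<subseteq> A"
  shows "transport \<phi> A B (a \<circ> b) = transport \<phi> A B a \<circ> transport \<phi> A B b"
proof
  fix x
  show "transport \<phi> A B (a \<circ> b) x = (transport \<phi> A B a \<circ> transport \<phi> A B b) x"
  proof (cases "x \<in> B")
    case True
    then have "the_inv_into A \<phi> x \<in> A"
      by (rule bij_betw_apply[OF bij_betw_the_inv_into[OF assms(1)]])
    then have "b (the_inv_into A \<phi> x) \<in> A" using assms(2) by blast
    then show ?thesis
      using True bij_betw_apply[OF assms(1)] bij_betw_imp_inj_on[OF assms(1)]
      by (simp add: transport_def the_inv_into_f_f)
  qed (simp add: transport_def)
qed

lemma transport_funpow:
  assumes "bij_betw \<phi> A B" "g ` A \<subseteq> A"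
  shows "transport \<phi> A B (g ^^ r) = transport \<phi> A B g ^^ r"
proof (induction r)
  case 0
  show ?case
    using assms(1) by (auto simp: transport_def fun_eq_iff f_the_inv_into_f_bij_betw)
next
  case (Suc r)
  show ?case
    unfolding funpow_Suc_right transport_comp[OF assms] Suc ..
qed

lemma funpow_set_eq_funpow_less_card:
  fixes g :: "'a \<Rightarrow> 'a"
  assumes fin: "finite {g ^^ r | r. True}" and card: "card {g ^^ r | r. True} = p"
  shows "{g ^^ r | r. True} = {g ^^ r | r. r < p}"
proof -
  have "card ((\<lambda>r. g ^^ r) ` {0..p}) \<le> p"
    using card_mono[OF fin, of "(\<lambda>r. g ^^ r) ` {0..p}"] card by auto
  then have "\<not> inj_on (\<lambda>r. g ^^ r) {0..p}"
    by (auto dest: card_image)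
  then obtain a b where ab: "a < b" "b \<le> p" "g ^^ a = g ^^ b"
    using linorder_inj_onI'[of "{0..p}" "\<lambda>r. g ^^ r"] by auto
  have "g ^^ r \<in> {g ^^ t | t. t < b}" for r
  proof (induction r rule: less_induct)
    case (less r)
    show ?case
    proof (cases "r < b")
      case False
      then have "g ^^ r = g ^^ (r - b) \<circ> g ^^ b" by (simp flip: funpow_add)
      also have "\<dots> = g ^^ (r - b + a)" by (simp add: ab(3) funpow_add)
      finally show ?thesis using less[of "r - b + a"] ab(1) False by simp
    qed auto
  qed
  then show ?thesis using ab(2) by fastforce
qed

lemma funpow_eq_id_less_card:
  assumes "card {g ^^ r | r. r < p} = p" "r < p" "g ^^ r = id"
  shows "r = 0"
proof -
  have "{g ^^ r | r. r < p} = (\<lambda>r. g ^^ r) ` {..<p}" by auto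
  then have "inj_on (\<lambda>r. g ^^ r) {..<p}"
    using assms(1) by (intro eq_card_imp_inj_on) auto
  moreover have "g ^^ r = g ^^ 0" using assms(3) by simp
  ultimately show ?thesis using assms(2) inj_onD[of "\<lambda>r. g ^^ r" "{..<p}" r 0] by simp
qed

lemma funpow_fixes_outside:
  assumes "\<And>x. x \<notin> A \<Longrightarrow> g x = x" "x \<notin> A"
  shows "(g ^^ r) x = x"
  using assms by (induction r) auto

lemma constituent_fixes_outside: "a \<in> constituent H A \<Longrightarrow> x \<notin> A \<Longrightarrow> a x = x"
  by (auto simp: constituent_def restr_def)

lemma constituent_maps_orbit:
  assumes "subgroup H (sym_group n)" "A = {h x0 | h. h \<in> H}" "a \<in> constituent H A"
  shows "a ` A \<subseteq> A"
proof
  fix y assume "y \<in> a ` A"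
  then obtain z where z: "z \<in> A" "y = a z" by blast
  obtain h where h: "h \<in> H" "a = restr A h" using assms(3) by (auto simp: constituent_def)
  obtain h1 where h1: "h1 \<in> H" "z = h1 x0" using z(1) assms(2) by blast
  have "y = (h \<circ> h1) x0" using z h h1 by (simp add: restr_def)
  moreover have "h \<circ> h1 \<in> H"
    using subgroup.m_closed[OF assms(1) h(1) h1(1)] by (simp add: sym_group_mult)
  ultimately show "y \<in> A" using assms(2) by blast
qed

lemma constituent_eq_conj_gen_powers:
  assumes H: "subgroup H (sym_group n)" and orbit1: "\<Omega> 1 = {h x0 | h. h \<in> H}"
    and card1: "card (constituent H (\<Omega> 1)) = p" "p > 0"
    and g1_gen: "constituent H (\<Omega> 1) = {g1 ^^ r | r. True}"
    and \<phi>_iso: "\<forall>i\<in>{2..k}. perm_iso_witness H (\<Omega> 1) (\<Omega> i) (\<phi> i)"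
    and j: "j \<in> {1..k}"
  shows "constituent H (\<Omega> j) = {conj_gen \<Omega> \<phi> g1 j ^^ r | r. r < p}"
proof -
  have C1: "constituent H (\<Omega> 1) = {g1 ^^ r | r. r < p}"
  proof -
    have "finite {g1 ^^ r | r. True}" using card1 g1_gen card.infinite by force
    then show ?thesis using funpow_set_eq_funpow_less_card card1 g1_gen by simp
  qed
  show ?thesis
  proof (cases "j = 1")
    case True
    then show ?thesis using C1 by (simp add: conj_gen_def)
  next
    case False
    then have "perm_iso_witness H (\<Omega> 1) (\<Omega> j) (\<phi> j)" using \<phi>_iso j by auto
    then have bij: "bij_betw (\<phi> j) (\<Omega> 1) (\<Omega> j)"
      and img: "transport (\<phi> j) (\<Omega> 1) (\<Omega> j) ` constituent H (\<Omega> 1) = constituent H (\<Omega> j)"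
      by (auto simp: perm_iso_witness_iff)
    have "g1 ^^ 1 \<in> constituent H (\<Omega> 1)" using g1_gen by blast
    then have "g1 ` \<Omega> 1 \<subseteq> \<Omega> 1" using constituent_maps_orbit[OF H orbit1] by simp
    have "constituent H (\<Omega> j) = transport (\<phi> j) (\<Omega> 1) (\<Omega> j) ` {g1 ^^ r | r. r < p}"
      using img C1 by simp
    also have "\<dots> = {transport (\<phi> j) (\<Omega> 1) (\<Omega> j) (g1 ^^ r) | r. r < p}"
      by blast
    also have "\<dots> = {transport (\<phi> j) (\<Omega> 1) (\<Omega> j) g1 ^^ r | r. r < p}"
      by (simp only: transport_funpow[OF bij \<open>g1 ` \<Omega> 1 \<subseteq> \<Omega> 1\<close>])
    finally show ?thesis using False by (simp add: conj_gen_eq_transport)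
  qed
qed

definition cyclic_constituents ::
    "nat \<Rightarrow> nat \<Rightarrow> (nat \<Rightarrow> nat) set \<Rightarrow> (nat \<Rightarrow> nat set) \<Rightarrow> (nat \<Rightarrow> nat \<Rightarrow> nat) \<Rightarrow> bool" where
  "cyclic_constituents p k H \<Omega> g \<longleftrightarrow>
     (\<forall>j\<in>{1..k}. constituent H (\<Omega> j) = {g j ^^ r | r. r < p} \<and> card (constituent H (\<Omega> j)) = p)"

lemma cyclic_constituents_conj_gen:
  assumes H: "subgroup H (sym_group n)"
    and orbits: "\<forall>i\<in>{1..k}. \<exists>x. \<Omega> i = {h x | h. h \<in> H}"
    and card: "\<forall>i\<in>{1..k}. card (constituent H (\<Omega> i)) = p" and "p > 0"
    and g1_gen: "constituent H (\<Omega> 1) = {g1 ^^ r | r. True}"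
    and \<phi>_iso: "\<forall>i\<in>{2..k}. perm_iso_witness H (\<Omega> 1) (\<Omega> i) (\<phi> i)"
  shows "cyclic_constituents p k H \<Omega> (conj_gen \<Omega> \<phi> g1)"
  unfolding cyclic_constituents_def
proof
  fix j assume j: "j \<in> {1..k}"
  then have "1 \<in> {1..k}" by simp
  then obtain x0 where "\<Omega> 1 = {h x0 | h. h \<in> H}" using orbits by blast
  then show "constituent H (\<Omega> j) = {conj_gen \<Omega> \<phi> g1 j ^^ r | r. r < p} \<and>
      card (constituent H (\<Omega> j)) = p"
    using constituent_eq_conj_gen_powers[OF H _ _ \<open>p > 0\<close> g1_gen \<phi>_iso j] card j
      \<open>1 \<in> {1..k}\<close> by blast
qed

lemma ex_gamma_rep:
  assumes "cyclic_constituents p k H \<Omega> g" "h \<in> H"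
  shows "\<exists>v. gamma_rep p k \<Omega> g h v"
proof -
  have "\<forall>j\<in>{1..k}. \<exists>r. r < p \<and> (\<forall>x\<in>\<Omega> j. h x = (g j ^^ r) x)"
  proof
    fix j assume j: "j \<in> {1..k}"
    have "restr (\<Omega> j) h \<in> constituent H (\<Omega> j)" using assms(2) by (simp add: constituent_def)
    then obtain r where r: "r < p" "restr (\<Omega> j) h = g j ^^ r"
      using assms(1) j by (auto simp: cyclic_constituents_def)
    have "h x = (g j ^^ r) x" if "x \<in> \<Omega> j" for x
      using fun_cong[OF r(2), of x] that by (simp add: restr_def)
    then show "\<exists>r. r < p \<and> (\<forall>x\<in>\<Omega> j. h x = (g j ^^ r) x)" using r(1) by blast
  qed
  from bchoice[OF this]
  obtain v where "\<forall>j\<in>{1..k}. v j < p \<and> (\<forall>x\<in>\<Omega> j. h x = (g j ^^ v j) x)"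
    by blast
  then show ?thesis unfolding gamma_rep_def by blast
qed

lemma gamma_rep_eq_0_iff:
  assumes "cyclic_constituents p k H \<Omega> g" "1 < p"
    and v: "gamma_rep p k \<Omega> g h v" and j: "j \<in> {1..k}"
  shows "v j = 0 \<longleftrightarrow> (\<forall>x\<in>\<Omega> j. h x = x)"
proof
  have C: "constituent H (\<Omega> j) = {g j ^^ r | r. r < p}" "card (constituent H (\<Omega> j)) = p"
    using assms(1) j unfolding cyclic_constituents_def by blast+
  have vj: "v j < p" "\<forall>x\<in>\<Omega> j. h x = (g j ^^ v j) x"
    using v j by (auto simp: gamma_rep_def)
  then show "v j = 0 \<Longrightarrow> \<forall>x\<in>\<Omega> j. h x = x" by simp
  assume h_fixes: "\<forall>x\<in>\<Omega> j. h x = x"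
  have "g j ^^ 1 \<in> constituent H (\<Omega> j)" using C(1) \<open>1 < p\<close> by blast
  then have "g j \<in> constituent H (\<Omega> j)" by simp
  then have "(g j ^^ v j) x = x" if "x \<notin> \<Omega> j" for x
    by (rule funpow_fixes_outside[OF constituent_fixes_outside that])
  then have "g j ^^ v j = id"
    using h_fixes vj(2) by (auto simp: fun_eq_iff)
  moreover have "card {g j ^^ r | r. r < p} = p" using C by simp
  ultimately show "v j = 0" using funpow_eq_id_less_card vj(1) by blast
qed

lemma (in group) normalizer_conj_back:
  assumes "g \<in> normalizer G H" "H \<subseteq> carrier G" "h' \<in> H"
  shows "\<exists>h\<in>H. h' \<otimes> g = g \<otimes> h"
proof -
  have g: "g \<in> carrier G" and "g <# H #> inv g = H"
    using assms(1,2) unfolding normalizer_def stabilizer_def by auto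
  then obtain h where h: "h \<in> H" "h' = g \<otimes> h \<otimes> inv g"
    using assms(3) unfolding l_coset_def r_coset_def by auto
  then have "h' \<otimes> g = g \<otimes> h"
    using g assms(2) by (simp add: m_assoc subsetD)
  then show ?thesis using h(1) by blast
qed

lemma fixes_image_iff:
  assumes "inj \<nu>" "h' \<circ> \<nu> = \<nu> \<circ> h"
  shows "(\<forall>y\<in>\<nu> ` A. h' y = y) \<longleftrightarrow> (\<forall>x\<in>A. h x = x)"
  using assms by (auto simp: fun_eq_iff inj_eq)

lemma gamma_rep_conj_eq_0_iff:
  assumes "cyclic_constituents p k H \<Omega> g" "1 < p"
    and "inj \<nu>" "h' \<circ> \<nu> = \<nu> \<circ> h" "\<nu> ` \<Omega> j = \<Omega> j'"
    and "gamma_rep p k \<Omega> g h' v'" "gamma_rep p k \<Omega> g h v" "j \<in> {1..k}" "j' \<in> {1..k}"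
  shows "v' j' = 0 \<longleftrightarrow> v j = 0"
proof -
  have "v' j' = 0 \<longleftrightarrow> (\<forall>y\<in>\<Omega> j'. h' y = y)"
    using gamma_rep_eq_0_iff assms(1,2,6,9) by blast
  also have "\<dots> \<longleftrightarrow> (\<forall>x\<in>\<Omega> j. h x = x)"
    unfolding assms(5)[symmetric] by (rule fixes_image_iff[OF assms(3,4)])
  also have "\<dots> \<longleftrightarrow> v j = 0"
    using gamma_rep_eq_0_iff assms(1,2,7,8) by blast
  finally show ?thesis .
qed

lemma normalizer_gamma_rep_zero_transfer:
  assumes H: "subgroup H (sym_group n)" and \<nu>: "\<nu> \<in> normalizer (sym_group n) H"
    and cyclic: "cyclic_constituents p k H \<Omega> g" "1 < p"
    and h': "h' \<in> H" "gamma_rep p k \<Omega> g h' v'"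
  obtains h v where "h \<in> H" "gamma_rep p k \<Omega> g h v"
    "\<And>j j'. j \<in> {1..k} \<Longrightarrow> j' \<in> {1..k} \<Longrightarrow> \<nu> ` \<Omega> j = \<Omega> j' \<Longrightarrow> v' j' = 0 \<longleftrightarrow> v j = 0"
proof -
  obtain h where h: "h \<in> H" "h' \<circ> \<nu> = \<nu> \<circ> h"
    using group.normalizer_conj_back[OF sym_group_is_group \<nu> subgroup.subset[OF H] h'(1)]
    by (auto simp: sym_group_mult)
  have "\<nu> permutes {1..n}"
    using \<nu> unfolding normalizer_def stabilizer_def sym_group_carrier[symmetric] by blast
  then have "inj \<nu>" by (rule permutes_inj)
  obtain v where v: "gamma_rep p k \<Omega> g h v" using ex_gamma_rep[OF cyclic(1) h(1)] by blast
  show thesis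
    by (rule that[OF h(1) v gamma_rep_conj_eq_0_iff[OF cyclic \<open>inj \<nu>\<close> h(2) _ h'(2) v]])
qed

lemma in_rowspace_row:
  assumes "i \<in> {1..s}" "\<forall>j\<in>{1..k}. M i j < p"
  shows "in_rowspace p s k M (M i)"
  unfolding in_rowspace_def
proof (intro exI ballI)
  fix j assume "j \<in> {1..k}"
  then show "M i j = (\<Sum>l=1..s. (if l = i then 1 else 0) * M l j) mod p"
    using assms by (simp add: if_distrib[of "\<lambda>c. c * _"] cong: if_cong)
qed

lemma in_rowspace_std_form:
  assumes std: "\<forall>i\<in>{1..s}. \<forall>j\<in>{1..s}. M i j = (if i = j then 1 else 0)"
    and "s \<le> k" and v: "in_rowspace p s k M v" and j: "j \<in> {1..k}"
  shows "v j = (\<Sum>l=1..s. v l * M l j) mod p"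
proof -
  obtain c where c: "\<forall>j\<in>{1..k}. v j = (\<Sum>l=1..s. c l * M l j) mod p"
    using v unfolding in_rowspace_def by blast
  have "v l = c l mod p" if l: "l \<in> {1..s}" for l
  proof -
    have "(\<Sum>q=1..s. c q * M q l) = (\<Sum>q=1..s. if q = l then c q else 0)"
      using std l by (intro sum.cong) auto
    then show ?thesis using c l \<open>s \<le> k\<close> by simp
  qed
  then have "(\<Sum>l=1..s. v l * M l j) mod p = (\<Sum>l=1..s. c l mod p * M l j) mod p"
    by (intro arg_cong[where f = "\<lambda>x. x mod p"] sum.cong) auto
  also have "\<dots> = (\<Sum>l=1..s. c l mod p * M l j mod p) mod p"
    by (simp only: mod_sum_eq)
  also have "\<dots> = (\<Sum>l=1..s. c l * M l j) mod p"
    by (simp only: mod_mult_left_eq mod_sum_eq)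
  finally show ?thesis using c j by simp
qed

lemma in_rowspace_std_form_eq_0:
  assumes "\<forall>i\<in>{1..s}. \<forall>j\<in>{1..s}. M i j = (if i = j then 1 else 0)"
    and "s \<le> k" "in_rowspace p s k M v" "u \<in> {1..k}"
    and "\<forall>l\<in>{1..s}. v l = 0 \<or> M l u = 0"
  shows "v u = 0"
proof -
  have "(\<Sum>l=1..s. v l * M l u) = 0" using assms(5) by (intro sum.neutral) auto
  then show ?thesis using in_rowspace_std_form[OF assms(1-4)] by (simp only: mod_0)
qed

lemma prime_mult_mod_eq_0_less:
  fixes p a b :: nat
  assumes "prime p" "a < p" "b < p" "a * b mod p = 0"
  shows "a = 0 \<or> b = 0"
proof -
  have "p dvd a \<or> p dvd b" using assms(1,4) prime_dvd_mult_iff by blast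
  then show ?thesis using assms(2,3) nat_dvd_not_less by blast
qed

theorem lemma5p5:
  fixes p n k s m u :: nat
    and H :: "(nat \<Rightarrow> nat) set"
    and \<Omega> :: "nat \<Rightarrow> nat set"
    and g1 :: "nat \<Rightarrow> nat"
    and \<phi> :: "nat \<Rightarrow> nat \<Rightarrow> nat"
    and M :: "nat \<Rightarrow> nat \<Rightarrow> nat"
    and f :: "nat \<Rightarrow> nat"
  assumes prime: "prime p"
    and n_def: "n = p * k"
    and H_sub: "subgroup H (sym_group n)"
    \<comment> \<open>orbits Omega_1,...,Omega_k of H, each of size p\<close>
    and orb_cover: "(\<Union>i\<in>{1..k}. \<Omega> i) = {1..n}"
    and orb_disj: "\<forall>i\<in>{1..k}. \<forall>j\<in>{1..k}. i \<noteq> j \<longrightarrow> \<Omega> i \<inter> \<Omega> j = {}"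
    and orb_orbit: "\<forall>i\<in>{1..k}. \<exists>x. \<Omega> i = {h x | h. h \<in> H}"
    and orb_card: "\<forall>i\<in>{1..k}. card (\<Omega> i) = p"
    \<comment> \<open>each constituent G_i = H|Omega_i is cyclic of order p\<close>
    and G_cyclic: "\<forall>i\<in>{1..k}. card (constituent H (\<Omega> i)) = p \<and>
                     (\<exists>c. constituent H (\<Omega> i) = {c ^^ r | r. r < p})"
    \<comment> \<open>ordering of the orbits and order of H\<close>
    and s_le: "s \<le> k"
    and order_first: "card (constituent H (\<Union>i\<in>{1..s}. \<Omega> i)) = p ^ s"
    and order_H: "card H = p ^ s"
    \<comment> \<open>generators g_1, g_i = conjugates via permutation isomorphisms\<close>
    and g1_gen: "constituent H (\<Omega> 1) = {g1 ^^ r | r. True}"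
    and \<phi>1: "\<forall>x\<in>\<Omega> 1. \<phi> 1 x = x"
    and \<phi>_iso: "\<forall>i\<in>{2..k}. perm_iso_witness H (\<Omega> 1) (\<Omega> i) (\<phi> i)"
    \<comment> \<open>M in M(s,k,p), standard form, rows a basis of gamma(H)\<close>
    and M_entries: "\<forall>i\<in>{1..s}. \<forall>j\<in>{1..k}. M i j < p"
    and M_std: "\<forall>i\<in>{1..s}. \<forall>j\<in>{1..s}. M i j = (if i = j then 1 else 0)"
    and M_span: "\<forall>v. (\<exists>h\<in>H. gamma_rep p k \<Omega> (conj_gen \<Omega> \<phi> g1) h v) \<longleftrightarrow> in_rowspace p s k M v"
    and M_indep: "rows_independent p s k M"
    \<comment> \<open>J = {1..m} disjoint union {u}, f : J -> {1..k} injective\<close>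
    and m_range: "s \<le> m" "m \<le> k - 1"
    and u_range: "u \<in> {1..k}" "u \<notin> {1..m}"
    and f_maps: "f ` ({1..m} \<union> {u}) \<subseteq> {1..k}"
    and f_inj: "inj_on f ({1..m} \<union> {u})"
    and cond: "\<exists>i\<in>{1..s}. M i (f u) \<noteq> 0 \<and>
                 (\<forall>j\<in>({1..m} \<union> {u}) \<inter> {1..s}. (M i (f j) * M j u) mod p = 0)"
  shows "\<not> (\<exists>\<nu>\<in>normalizer (sym_group n) H. \<forall>j\<in>{1..m} \<union> {u}. \<nu> ` \<Omega> j = \<Omega> (f j))"
proof
  assume "\<exists>\<nu>\<in>normalizer (sym_group n) H. \<forall>j\<in>{1..m} \<union> {u}. \<nu> ` \<Omega> j = \<Omega> (f j)"
  then obtain \<nu> where \<nu>: "\<nu> \<in> normalizer (sym_group n) H"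
    and \<nu>\<Omega>: "\<forall>j\<in>{1..m} \<union> {u}. \<nu> ` \<Omega> j = \<Omega> (f j)" by blast
  define g where "g = conj_gen \<Omega> \<phi> g1"
  have "1 < p" using prime prime_gt_1_nat by blast
  have cyclic: "cyclic_constituents p k H \<Omega> g"
    unfolding g_def using G_cyclic \<open>1 < p\<close>
    by (intro cyclic_constituents_conj_gen[OF H_sub orb_orbit _ _ g1_gen \<phi>_iso]) auto
  obtain i where i: "i \<in> {1..s}" "M i (f u) \<noteq> 0"
    "\<forall>j\<in>({1..m} \<union> {u}) \<inter> {1..s}. M i (f j) * M j u mod p = 0"
    using cond by blast
  obtain h' where h': "h' \<in> H" "gamma_rep p k \<Omega> g h' (M i)"
    using M_span in_rowspace_row[OF i(1)] M_entries i(1) unfolding g_def by blast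
  obtain h v where h: "h \<in> H" and v: "gamma_rep p k \<Omega> g h v" and zero_transfer:
    "\<And>j j'. j \<in> {1..k} \<Longrightarrow> j' \<in> {1..k} \<Longrightarrow> \<nu> ` \<Omega> j = \<Omega> j' \<Longrightarrow> M i j' = 0 \<longleftrightarrow> v j = 0"
    using normalizer_gamma_rep_zero_transfer[OF H_sub \<nu> cyclic \<open>1 < p\<close> h'] by blast
  have "in_rowspace p s k M v" using M_span h v unfolding g_def by blast
  have transfer: "M i (f j) = 0 \<longleftrightarrow> v j = 0" if j: "j \<in> {1..m} \<union> {u}" for j
  proof -
    have "j \<in> {1..k}" using j m_range u_range by auto
    moreover have "f j \<in> {1..k}" using f_maps j by blast
    ultimately show ?thesis
      by (rule zero_transfer[OF _ _ bspec[OF \<nu>\<Omega> j]])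
  qed
  have "\<forall>l\<in>{1..s}. v l = 0 \<or> M l u = 0"
  proof
    fix l assume l: "l \<in> {1..s}"
    have "l \<in> {1..m}" using l m_range by auto
    then have "l \<in> ({1..m} \<union> {u}) \<inter> {1..s}" using l by blast
    then have prod: "M i (f l) * M l u mod p = 0" by (rule bspec[OF i(3)])
    have "f l \<in> {1..k}" using f_maps \<open>l \<in> {1..m}\<close> by blast
    then have "M i (f l) < p" "M l u < p" using M_entries i(1) l u_range(1) by simp_all
    then have "M i (f l) = 0 \<or> M l u = 0" by (rule prime_mult_mod_eq_0_less[OF prime _ _ prod])
    moreover have "M i (f l) = 0 \<longleftrightarrow> v l = 0" using \<open>l \<in> {1..m}\<close> by (intro transfer) simp
    ultimately show "v l = 0 \<or> M l u = 0" by auto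
  qed
  then have "v u = 0"
    by (rule in_rowspace_std_form_eq_0[OF M_std s_le \<open>in_rowspace p s k M v\<close> u_range(1)])
  then show False using transfer[of u] i(2) by simp
qed

end
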